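(* Let $a\in[0,\infty)$ and let $t:[0,1]\to[0,\infty]$ and $s:[0,\infty]\to[0,1]$ be continuous and increasing functions such that (1) $s(x)=0$ if and only if $x\in[0,a]$, and (2) the function $G_{t,s}:[0,1]^2\to[0,1]$, $G_{t,s}(x,y)=s(t(x)+t(y))$, is a grouping function. Then $t(x)=\frac{a}{2}$ if and only if $x=0$.
   Context: "Increasing" means non-decreasing. Arithmetic in $[0,\infty]$ uses $c+\infty=\infty$; continuity on $[0,\infty]$ refers to the usual topology of the extended half-line. A grouping function is a map $G:[0,1]^2\to[0,1]$ that is (G1) commutative, (G2) $G(x,y)=0$ iff $x=y=0$, (G3) $G(x,y)=1$ iff $x=1$ or $y=1$, (G4) increasing in each variable, (G5) continuous. *)

theory Defs
  imports "HOL-Analysis.Analysis" "HOL-Library.Extended_Nonnegative_Real"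
begin

definition grouping_function :: "(real \<Rightarrow> real \<Rightarrow> real) \<Rightarrow> bool" where
  "grouping_function G \<longleftrightarrow>
     (\<forall>x\<in>{0..1}. \<forall>y\<in>{0..1}. G x y \<in> {0..1}) \<and>
     (\<forall>x\<in>{0..1}. \<forall>y\<in>{0..1}. G x y = G y x) \<and>
     (\<forall>x\<in>{0..1}. \<forall>y\<in>{0..1}. G x y = 0 \<longleftrightarrow> x = 0 \<and> y = 0) \<and>
     (\<forall>x\<in>{0..1}. \<forall>y\<in>{0..1}. G x y = 1 \<longleftrightarrow> x = 1 \<or> y = 1) \<and>
     (\<forall>x\<in>{0..1}. \<forall>x'\<in>{0..1}. \<forall>y\<in>{0..1}. x \<le> x' \<longrightarrow> G x y \<le> G x' y) \<and>
     (\<forall>x\<in>{0..1}. \<forall>y\<in>{0..1}. \<forall>y'\<in>{0..1}. y \<le> y' \<longrightarrow> G x y \<le> G x y') \<and>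
     continuous_on ({0..1} \<times> {0..1}) (\<lambda>(x, y). G x y)"

end

theory Submission
  imports Defs
begin

(* By (G2), G(0,0) = 0 forces 2 t(0) <= a, while G(x,0) > 0 for x > 0 forces t(x) + t(0) > a.
   Letting x tend to 0 and using continuity of t gives 2 t(0) = a, i.e. t(0) = a/2; for x > 0 the
   strict inequality t(x) > a - t(0) = a/2 then rules out t(x) = a/2.
   Only (G2), the zero set of s and the continuity of t are needed. *)

lemma grouping_function_eq_0_iff:
  assumes "grouping_function G" "x \<in> {0..1}" "y \<in> {0..1}"
  shows "G x y = 0 \<longleftrightarrow> x = 0 \<and> y = 0"
  using assms unfolding grouping_function_def by (elim conjE) simp

lemma continuous_on_ge_at_left_endpoint:
  fixes f :: "real \<Rightarrow> 'a::linorder_topology"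
  assumes f_cont: "continuous_on {l..u} f" and "l < u"
    and above: "\<And>x. x \<in> {l<..u} \<Longrightarrow> b \<le> f x"
  shows "b \<le> f l"
proof (rule tendsto_lowerbound)
  have "(f \<longlongrightarrow> f l) (at l within {l..u})"
    using f_cont \<open>l < u\<close> by (simp add: continuous_on_def)
  then show "(f \<longlongrightarrow> f l) (at l within {l<..u})"
    by (rule tendsto_within_subset) auto
  show "eventually (\<lambda>x. b \<le> f x) (at l within {l<..u})"
    using above by (auto simp: eventually_at_filter)
  show "at l within {l<..u} \<noteq> bot"
    using \<open>l < u\<close> by (simp add: at_within_eq_bot_iff)
qed

lemma ennreal_add_self_eq_iff_half:
  assumes "0 \<le> a"
  shows "c + c = ennreal a \<longleftrightarrow> c = ennreal (a / 2)"
proof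
  assume sum: "c + c = ennreal a"
  then obtain r where r: "c = ennreal r" "0 \<le> r"
    by (cases c) auto
  with sum have "ennreal (r + r) = ennreal a"
    by (simp flip: ennreal_plus)
  with r \<open>0 \<le> a\<close> have "r = a / 2"
    by simp
  with r show "c = ennreal (a / 2)" by simp
next
  assume "c = ennreal (a / 2)"
  with \<open>0 \<le> a\<close> show "c + c = ennreal a"
    by (simp flip: ennreal_plus)
qed

theorem proposition6p1:
  fixes a :: real and t :: "real \<Rightarrow> ennreal" and s :: "ennreal \<Rightarrow> real"
  assumes a_nonneg: "0 \<le> a"
    and t_cont: "continuous_on {0..1} t"
    and t_mono: "mono_on {0..1} t"
    and s_range: "\<forall>u. s u \<in> {0..1}"
    and s_cont: "continuous_on UNIV s"
    and s_mono: "mono s"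
    and s_zero: "\<forall>u. s u = 0 \<longleftrightarrow> u \<le> ennreal a"
    and grp: "grouping_function (\<lambda>x y. s (t x + t y))"
  shows "\<forall>x\<in>{0..1}. t x = ennreal (a / 2) \<longleftrightarrow> x = 0"
proof -
  have sum_le_iff: "t x + t y \<le> ennreal a \<longleftrightarrow> x = 0 \<and> y = 0"
    if "x \<in> {0..1}" "y \<in> {0..1}" for x y
    using grouping_function_eq_0_iff[OF grp that] s_zero by simp
  have above: "ennreal a < t x + t 0" if "x \<in> {0<..1}" for x
    using sum_le_iff[of x 0] that by (simp add: not_le)
  have "ennreal a \<le> t 0 + t 0"
    by (rule continuous_on_ge_at_left_endpoint[where u = 1])
      (auto intro!: continuous_on_add continuous_on_const t_cont less_imp_le above)
  moreover have "t 0 + t 0 \<le> ennreal a"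
    using sum_le_iff[of 0 0] by simp
  ultimately have t0: "t 0 = ennreal (a / 2)"
    using ennreal_add_self_eq_iff_half[OF a_nonneg, of "t 0"] by simp
  have "t x \<noteq> ennreal (a / 2)" if "x \<in> {0<..1}" for x
    using above[OF that] t0 ennreal_add_self_eq_iff_half[OF a_nonneg, of "ennreal (a / 2)"] by auto
  with t0 show ?thesis
    by (metis atLeastAtMost_iff greaterThanAtMost_iff order_le_less)
qed

end
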